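(* For $\rho\ge0,\eta\ge0$ let $$\mathcal{G}_{\mathsf{sec}}(\rho,\eta)=\Big\{p:\ \sup_{\|v\|_2=1,\ r\in\mathbb{F}(p,\eta,\,x\mapsto|v^\top x|^2)}\big|\mathbb{E}_p[|v^\top X|^2]-\mathbb{E}_r[|v^\top X|^2]\big|\le\rho\Big\}.$$ Then for any $\epsilon$ with $2\epsilon\le\eta$, $$\sup_{p_1,p_2\in\mathcal{G}_{\mathsf{sec}}(\rho,\eta):\ W_1(p_1,p_2)\le2\epsilon}\|\mathbb{E}_{p_1}[XX^\top]-\mathbb{E}_{p_2}[XX^\top]\|_2\le2\rho.$$
   Context: Distributions are on $\mathbb{R}^d$ with finite second moments. $W_1(p,q)=\inf_{\pi\in\Pi(p,q)}\int\|x-y\|_2\,d\pi(x,y)$. Friendly perturbation: $r\in\mathbb{F}(p,\eta,f)$ means there is a coupling $\pi_{X,Y}$ of $X\sim p$ and $Y\sim r$ with $\mathbb{E}_\pi\|X-Y\|_2\le\eta$ such that $f(Y)$ lies between $f(X)$ and $\mathbb{E}_r[f(Y)]$ almost surely. $\|\cdot\|_2$ on matrices is the operator norm. *)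

theory Defs
  imports "HOL-Probability.Probability"
begin

definition is_dist2 :: "(real^'n) measure \<Rightarrow> bool" where
  "is_dist2 p \<longleftrightarrow> prob_space p \<and> sets p = sets borel \<and>
     integrable p (\<lambda>x. norm x ^ 2)"

definition coupling :: "((real^'n) \<times> (real^'n)) measure \<Rightarrow> (real^'n) measure \<Rightarrow> (real^'n) measure \<Rightarrow> bool" where
  "coupling \<pi> p q \<longleftrightarrow> prob_space \<pi> \<and> sets \<pi> = sets borel \<and>
     distr \<pi> borel fst = p \<and> distr \<pi> borel snd = q"

definition W1 :: "(real^'n) measure \<Rightarrow> (real^'n) measure \<Rightarrow> ennreal" where
  "W1 p q = (INF \<pi> \<in> {\<pi>. coupling \<pi> p q}. \<integral>\<^sup>+ z. ennreal (norm (fst z - snd z)) \<partial>\<pi>)"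

definition friendly :: "(real^'n) measure \<Rightarrow> real \<Rightarrow> (real^'n \<Rightarrow> real) \<Rightarrow> (real^'n) measure set" where
  "friendly p \<eta> f = {r. is_dist2 r \<and> (\<exists>\<pi>. coupling \<pi> p r \<and>
      (\<integral>\<^sup>+ z. ennreal (norm (fst z - snd z)) \<partial>\<pi>) \<le> ennreal \<eta> \<and>
      (AE z in \<pi>. min (f (fst z)) (\<integral>y. f y \<partial>r) \<le> f (snd z) \<and>
                  f (snd z) \<le> max (f (fst z)) (\<integral>y. f y \<partial>r)))}"

text \<open>G_sec(rho, eta); the sup bound is written as a bound on every element of the set.\<close>
definition G_sec :: "real \<Rightarrow> real \<Rightarrow> (real^'n) measure set" where
  "G_sec \<rho> \<eta> = {p. is_dist2 p \<and>
     (\<forall>v::real^'n. \<forall>r. norm v = 1 \<longrightarrow> r \<in> friendly p \<eta> (\<lambda>x. \<bar>v \<bullet> x\<bar>^2) \<longrightarrow>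
        \<bar>(\<integral>x. \<bar>v \<bullet> x\<bar>^2 \<partial>p) - (\<integral>x. \<bar>v \<bullet> x\<bar>^2 \<partial>r)\<bar> \<le> \<rho>)}"

definition second_moment :: "(real^'n) measure \<Rightarrow> real^'n^'n" where
  "second_moment p = (\<chi> i j. \<integral>x. x$i * x$j \<partial>p)"

end

theory Submission
  imports Defs
begin

(* Write S for the difference of the two second-moment matrices. S is symmetric, so its operator
   norm is the largest value of |v \<bullet> S v| over unit vectors v, and v \<bullet> S v is the difference of
   the second moments of the projections |v \<bullet> X1| and |v \<bullet> X2|: everything reduces to one
   dimension.

   Couple p1 and p2 at transport cost at most eta + delta and call w1, w2 the coupled projections.
   Lowering w1 towards a level t, but never below w2, and raising w2 towards t, but never above w1,
   are two perturbations whose costs always add up to E (w1 - w2)^+ <= eta + delta, and the lowered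
   variable stays below the raised one. At the level alpha where the lowered variable has second
   moment alpha^2 both perturbations are friendly, so membership in G_sec bounds E w1^2 - E w2^2 by
   2 rho. If one of the two costs exceeds eta, its level is moved until that cost is exactly eta,
   which changes the second moment by O(delta); letting delta tend to 0 gives the bound.
   For eta = 0 the distance W1 vanishes, and the truncated second moments, being bounded Lipschitz
   functionals, already coincide. *)

section \<open>Symmetric matrices and second moments\<close>

lemma symmetric_matrix_inner_commute:
  fixes M :: "real^'n^'n"
  assumes "transpose M = M"
  shows "y \<bullet> (M *v x) = x \<bullet> (M *v y)"
  by (metis assms dot_lmul_matrix inner_commute transpose_matrix_vector)

lemma onorm_symmetric_matrix_le:
  fixes M :: "real^'n^'n"
  assumes sym: "transpose M = M"
    and quadratic_bound: "\<And>v. norm v = 1 \<Longrightarrow> \<bar>v \<bullet> (M *v v)\<bar> \<le> c"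
  shows "onorm (\<lambda>x. M *v x) \<le> c"
proof (rule onorm_le)
  have scaled_bound: "\<bar>z \<bullet> (M *v z)\<bar> \<le> c * (norm z)\<^sup>2" for z
  proof (cases "z = 0")
    case False
    have "\<bar>(z /\<^sub>R norm z) \<bullet> (M *v (z /\<^sub>R norm z))\<bar> \<le> c"
      using False by (intro quadratic_bound) simp
    then show ?thesis
      using False by (simp add: matrix_vector_mult_scaleR power2_eq_square field_simps)
  qed simp
  have polarization: "4 * (y \<bullet> (M *v x)) \<le> 2 * c * ((norm x)\<^sup>2 + (norm y)\<^sup>2)" for x y
  proof -
    have "4 * (y \<bullet> (M *v x)) = (x + y) \<bullet> (M *v (x + y)) - (x - y) \<bullet> (M *v (x - y))"
      using symmetric_matrix_inner_commute[OF sym, of y x]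
      by (simp add: matrix_vector_right_distrib matrix_vector_mult_diff_distrib
          inner_add_left inner_add_right inner_diff_left inner_diff_right)
    also have "\<dots> \<le> c * (norm (x + y))\<^sup>2 + c * (norm (x - y))\<^sup>2"
      using scaled_bound[of "x + y"] scaled_bound[of "x - y"] by (simp add: abs_le_iff)
    also have "\<dots> = 2 * c * ((norm x)\<^sup>2 + (norm y)\<^sup>2)"
      by (simp add: power2_norm_eq_inner inner_add_left inner_add_right inner_diff_left
          inner_diff_right inner_commute algebra_simps)
    finally show ?thesis .
  qed
  have c_nonneg: "0 \<le> c"
    using quadratic_bound[OF norm_axis_1] abs_ge_zero order_trans by blast
  fix x :: "real^'n"
  show "norm (M *v x) \<le> c * norm x"
  proof (cases "M *v x = 0")
    case False
    define y where "y = (norm x / norm (M *v x)) *\<^sub>R (M *v x)"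
    have "norm y = norm x" and "y \<bullet> (M *v x) = norm x * norm (M *v x)"
      using False by (simp_all add: y_def power2_norm_eq_inner[symmetric] power2_eq_square)
    then have "norm x * norm (M *v x) \<le> norm x * (c * norm x)"
      using polarization[where x = x and y = y] by (simp add: power2_eq_square mult_ac)
    moreover have "0 < norm x"
      using False by auto
    ultimately show ?thesis
      by simp
  qed (simp add: c_nonneg)
qed

lemma is_dist2_measurable_iff: "is_dist2 p \<Longrightarrow> measurable p N = measurable borel N"
  by (intro measurable_cong_sets) (simp_all add: is_dist2_def)

lemma integrable_component_product:
  assumes "is_dist2 p"
  shows "integrable p (\<lambda>x. x$i * x$j)"
proof (rule Bochner_Integration.integrable_bound)
  show "integrable p (\<lambda>x. norm x ^ 2)"
    using assms by (simp add: is_dist2_def)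
  show "(\<lambda>x. x$i * x$j) \<in> borel_measurable p"
    using assms by (simp add: is_dist2_measurable_iff)
  show "AE x in p. norm (x$i * x$j) \<le> norm (norm x ^ 2)"
    by (intro AE_I2)
      (simp add: abs_mult power2_eq_square mult_mono[OF component_le_norm_cart component_le_norm_cart])
qed

lemma inner_second_moment:
  assumes "is_dist2 p"
  shows "v \<bullet> (second_moment p *v v) = (\<integral>x. \<bar>v \<bullet> x\<bar>\<^sup>2 \<partial>p)"
proof -
  have "v \<bullet> (second_moment p *v v) = (\<Sum>i\<in>UNIV. v$i * (\<Sum>j\<in>UNIV. (\<integral>x. x$i * x$j \<partial>p) * v$j))"
    unfolding inner_vec_def matrix_vector_mult_def second_moment_def by simp
  also have "\<dots> = (\<Sum>i\<in>UNIV. \<Sum>j\<in>UNIV. (\<integral>x. x$i * x$j \<partial>p) * (v$i * v$j))"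
    by (simp add: sum_distrib_left algebra_simps)
  also have "\<dots> = (\<Sum>i\<in>UNIV. \<Sum>j\<in>UNIV. (\<integral>x. v$i * (x$i * x$j) * v$j \<partial>p))"
    by (simp only: integral_mult_left_zero[symmetric]) (simp only: algebra_simps)
  also have "\<dots> = (\<integral>x. (\<Sum>i\<in>UNIV. \<Sum>j\<in>UNIV. v$i * (x$i * x$j) * v$j) \<partial>p)"
    using integrable_component_product[OF assms] by simp
  also have "\<dots> = (\<integral>x. \<bar>v \<bullet> x\<bar>\<^sup>2 \<partial>p)"
    by (simp add: inner_vec_def power2_eq_square sum_product mult_ac)
  finally show ?thesis .
qed

lemma transpose_second_moment: "transpose (second_moment p) = second_moment p"
  by (simp add: transpose_def second_moment_def vec_eq_iff mult.commute)

lemma transpose_diff: "transpose (A - B) = transpose A - transpose (B :: 'a::ab_group_add^'n^'m)"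
  by (simp add: transpose_def vec_eq_iff)

section \<open>Couplings and vanishing transport distance\<close>

lemma integrable_inner_square:
  assumes "is_dist2 p"
  shows "integrable p (\<lambda>x. \<bar>v \<bullet> x\<bar>\<^sup>2)"
proof (rule Bochner_Integration.integrable_bound)
  show "integrable p (\<lambda>x. (norm v)\<^sup>2 * norm x ^ 2)"
    using assms by (simp add: is_dist2_def)
  show "(\<lambda>x. \<bar>v \<bullet> x\<bar>\<^sup>2) \<in> borel_measurable p"
    using assms by (simp add: is_dist2_measurable_iff)
  have "\<bar>v \<bullet> x\<bar>\<^sup>2 \<le> (norm v * norm x)\<^sup>2" for x
    by (intro power_mono Cauchy_Schwarz_ineq2) simp
  then show "AE x in p. norm (\<bar>v \<bullet> x\<bar>\<^sup>2) \<le> norm ((norm v)\<^sup>2 * norm x ^ 2)"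
    by (simp add: power_mult_distrib)
qed

lemma fst_borel_measurable [measurable]:
  "fst \<in> borel_measurable (borel :: ('a::second_countable_topology \<times> 'b::second_countable_topology) measure)"
  using measurable_fst[of "borel :: 'a measure" "borel :: 'b measure"] by (simp add: borel_prod)

lemma snd_borel_measurable [measurable]:
  "snd \<in> borel_measurable (borel :: ('a::second_countable_topology \<times> 'b::second_countable_topology) measure)"
  using measurable_snd[of "borel :: 'a measure" "borel :: 'b measure"] by (simp add: borel_prod)

lemma W1_less_imp_coupling:
  assumes "W1 p q < c"
  obtains \<pi> where "coupling \<pi> p q" and "(\<integral>\<^sup>+z. ennreal (norm (fst z - snd z)) \<partial>\<pi>) < c"
  using assms unfolding W1_def by (auto simp: INF_less_iff)

lemma coupling_swap:
  assumes "coupling \<pi> p q"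
  shows "coupling (distr \<pi> borel (\<lambda>z. (snd z, fst z))) q p"
    and "(\<integral>\<^sup>+z. ennreal (norm (fst z - snd z)) \<partial>distr \<pi> borel (\<lambda>z. (snd z, fst z)))
      = (\<integral>\<^sup>+z. ennreal (norm (fst z - snd z)) \<partial>\<pi>)"
proof -
  have sets: "sets \<pi> = sets borel"
    using assms by (simp add: coupling_def)
  have swap [measurable]: "(\<lambda>z. (snd z, fst z)) \<in> measurable \<pi> borel"
    using measurable_Pair[OF snd_borel_measurable fst_borel_measurable]
    by (simp add: borel_prod measurable_cong_sets[OF sets refl])
  show "coupling (distr \<pi> borel (\<lambda>z. (snd z, fst z))) q p"
    using assms by (auto simp: coupling_def prob_space.prob_space_distr distr_distr comp_def
        measurable_cong_sets[OF sets refl])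
  show "(\<integral>\<^sup>+z. ennreal (norm (fst z - snd z)) \<partial>distr \<pi> borel (\<lambda>z. (snd z, fst z)))
      = (\<integral>\<^sup>+z. ennreal (norm (fst z - snd z)) \<partial>\<pi>)"
    by (simp add: nn_integral_distr norm_minus_commute)
qed

lemma W1_commute:
  fixes p q :: "(real^'n) measure"
  shows "W1 p q = W1 q p"
proof -
  have le: "W1 q p \<le> W1 p q" for p q :: "(real^'n) measure"
    unfolding W1_def
  proof (rule INF_mono)
    fix \<pi> assume "\<pi> \<in> {\<pi>. coupling \<pi> p q}"
    then show "\<exists>\<pi>'\<in>{\<pi>. coupling \<pi> q p}. (\<integral>\<^sup>+z. ennreal (norm (fst z - snd z)) \<partial>\<pi>')
        \<le> (\<integral>\<^sup>+z. ennreal (norm (fst z - snd z)) \<partial>\<pi>)"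
      using coupling_swap[of \<pi> p q] by (intro bexI[of _ "distr \<pi> borel (\<lambda>z. (snd z, fst z))"]) auto
  qed
  show ?thesis
    by (intro antisym le)
qed

lemma coupling_Lipschitz_integral_diff:
  fixes f :: "real^'n \<Rightarrow> real"
  assumes coupling: "coupling \<pi> p q"
    and cost: "(\<integral>\<^sup>+z. ennreal (norm (fst z - snd z)) \<partial>\<pi>) \<le> ennreal c" "0 \<le> c"
    and f: "f \<in> borel_measurable borel" "\<And>x. \<bar>f x\<bar> \<le> B"
    and Lipschitz: "\<And>x y. \<bar>f x - f y\<bar> \<le> L * norm (x - y)" "0 \<le> L"
  shows "\<bar>(\<integral>x. f x \<partial>p) - (\<integral>x. f x \<partial>q)\<bar> \<le> L * c"
proof -
  interpret prob_space \<pi>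
    using coupling by (simp add: coupling_def)
  have sets: "sets \<pi> = sets borel" and marginals: "distr \<pi> borel fst = p" "distr \<pi> borel snd = q"
    using coupling by (simp_all add: coupling_def)
  have [measurable]: "f \<circ> fst \<in> borel_measurable \<pi>" "f \<circ> snd \<in> borel_measurable \<pi>"
    using f(1) by (simp_all add: measurable_cong_sets[OF sets refl])
  have integrable: "integrable \<pi> (f \<circ> fst)" "integrable \<pi> (f \<circ> snd)"
    using f(2) by (auto intro!: integrable_const_bound[where B = B])
  have "(\<integral>x. f x \<partial>p) - (\<integral>x. f x \<partial>q) = (\<integral>z. f (fst z) - f (snd z) \<partial>\<pi>)"
    using integrable f(1) unfolding marginals[symmetric]
    by (simp add: integral_distr measurable_cong_sets[OF sets refl] comp_def)
  then have "ennreal \<bar>(\<integral>x. f x \<partial>p) - (\<integral>x. f x \<partial>q)\<bar>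
      \<le> (\<integral>\<^sup>+z. ennreal \<bar>f (fst z) - f (snd z)\<bar> \<partial>\<pi>)"
    using integral_norm_bound_ennreal[of \<pi> "\<lambda>z. f (fst z) - f (snd z)"] integrable
    by (simp add: comp_def)
  also have "\<dots> \<le> (\<integral>\<^sup>+z. ennreal L * ennreal (norm (fst z - snd z)) \<partial>\<pi>)"
    using Lipschitz by (intro nn_integral_mono) (simp add: ennreal_mult[symmetric] ennreal_leI)
  also have "\<dots> = ennreal L * (\<integral>\<^sup>+z. ennreal (norm (fst z - snd z)) \<partial>\<pi>)"
    by (intro nn_integral_cmult) (simp add: measurable_cong_sets[OF sets refl])
  also have "\<dots> \<le> ennreal L * ennreal c"
    using cost(1) by (rule mult_left_mono) simp
  also have "\<dots> = ennreal (L * c)"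
    using cost(2) Lipschitz(2) by (simp add: ennreal_mult)
  finally show ?thesis
    using cost Lipschitz(2) by (simp add: ennreal_le_iff)
qed

lemma W1_zero_imp_Lipschitz_integral_eq:
  fixes f :: "real^'n \<Rightarrow> real"
  assumes W1: "W1 p q = 0"
    and f: "f \<in> borel_measurable borel" "\<And>x. \<bar>f x\<bar> \<le> B"
    and Lipschitz: "\<And>x y. \<bar>f x - f y\<bar> \<le> L * norm (x - y)" "0 \<le> L"
  shows "(\<integral>x. f x \<partial>p) = (\<integral>x. f x \<partial>q)"
proof -
  have "\<bar>(\<integral>x. f x \<partial>p) - (\<integral>x. f x \<partial>q)\<bar> \<le> 0 + e" if "0 < e" for e
  proof -
    have "W1 p q < ennreal (e / (L + 1))"
      using W1 that Lipschitz(2) by simp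
    then obtain \<pi> where "coupling \<pi> p q" "(\<integral>\<^sup>+z. ennreal (norm (fst z - snd z)) \<partial>\<pi>) < ennreal (e / (L + 1))"
      by (rule W1_less_imp_coupling)
    then have "\<bar>(\<integral>x. f x \<partial>p) - (\<integral>x. f x \<partial>q)\<bar> \<le> L * (e / (L + 1))"
      using that Lipschitz(2) by (intro coupling_Lipschitz_integral_diff[OF _ _ _ f Lipschitz]) auto
    also have "\<dots> \<le> e"
      using that Lipschitz(2) by (simp add: field_simps)
    finally show ?thesis by simp
  qed
  then show ?thesis
    using field_le_epsilon[of "\<bar>(\<integral>x. f x \<partial>p) - (\<integral>x. f x \<partial>q)\<bar>" 0] by simp
qed

lemma tendsto_integral_truncated_square:
  fixes f :: "'a \<Rightarrow> real"
  assumes [measurable]: "f \<in> borel_measurable M" and integrable: "integrable M (\<lambda>x. (f x)\<^sup>2)"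
  shows "(\<lambda>n. \<integral>x. (min \<bar>f x\<bar> (real n))\<^sup>2 \<partial>M) \<longlonglongrightarrow> (\<integral>x. (f x)\<^sup>2 \<partial>M)"
proof (rule integral_dominated_convergence[where w = "\<lambda>x. (f x)\<^sup>2"])
  show "AE x in M. (\<lambda>n. (min \<bar>f x\<bar> (real n))\<^sup>2) \<longlonglongrightarrow> (f x)\<^sup>2" for x
  proof (intro AE_I2 tendsto_eventually)
    fix x
    have "eventually (\<lambda>n. \<bar>f x\<bar> \<le> real n) sequentially"
      using filterlim_real_sequentially by (simp add: filterlim_at_top)
    then show "eventually (\<lambda>n. (min \<bar>f x\<bar> (real n))\<^sup>2 = (f x)\<^sup>2) sequentially"
      by eventually_elim simp
  qed
  have "(min \<bar>f x\<bar> (real n))\<^sup>2 \<le> \<bar>f x\<bar>\<^sup>2" for n x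
    by (intro power_mono) auto
  then show "AE x in M. norm ((min \<bar>f x\<bar> (real n))\<^sup>2) \<le> (f x)\<^sup>2" for n
    by simp
qed (use integrable in simp_all)

lemma abs_power2_diff_le:
  fixes a b W :: real
  assumes "0 \<le> a" "a \<le> W" "0 \<le> b" "b \<le> W"
  shows "\<bar>a\<^sup>2 - b\<^sup>2\<bar> \<le> 2 * W * \<bar>a - b\<bar>"
proof -
  have "a\<^sup>2 - b\<^sup>2 = (a - b) * (a + b)"
    by (simp add: power2_eq_square algebra_simps)
  then have "\<bar>a\<^sup>2 - b\<^sup>2\<bar> = \<bar>a - b\<bar> * (a + b)"
    using assms by (simp add: abs_mult)
  also have "\<dots> \<le> \<bar>a - b\<bar> * (2 * W)"
    using assms by (intro mult_left_mono) auto
  finally show ?thesis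
    by (simp add: mult_ac)
qed

lemma truncated_square_Lipschitz:
  fixes a b B :: real
  assumes "0 \<le> a" "0 \<le> b" "0 \<le> B"
  shows "\<bar>(min a B)\<^sup>2 - (min b B)\<^sup>2\<bar> \<le> 2 * B * \<bar>a - b\<bar>"
proof -
  have "\<bar>(min a B)\<^sup>2 - (min b B)\<^sup>2\<bar> \<le> 2 * B * \<bar>min a B - min b B\<bar>"
    using assms by (intro abs_power2_diff_le) simp_all
  also have "\<dots> \<le> 2 * B * \<bar>a - b\<bar>"
    using assms by (intro mult_left_mono) (auto simp: min_def abs_if)
  finally show ?thesis .
qed

lemma W1_zero_imp_directional_moment_eq:
  assumes "is_dist2 p" "is_dist2 q" "W1 p q = 0"
  shows "(\<integral>x. \<bar>v \<bullet> x\<bar>\<^sup>2 \<partial>p) = (\<integral>x. \<bar>v \<bullet> x\<bar>\<^sup>2 \<partial>q)"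
proof -
  define trunc where "trunc n x = (min \<bar>v \<bullet> x\<bar> (real n))\<^sup>2" for n x
  have truncated_eq: "(\<integral>x. trunc n x \<partial>p) = (\<integral>x. trunc n x \<partial>q)" for n
  proof (rule W1_zero_imp_Lipschitz_integral_eq[where B = "(real n)\<^sup>2" and L = "2 * real n * norm v"])
    show "\<bar>trunc n x - trunc n y\<bar> \<le> 2 * real n * norm v * norm (x - y)" for x y
    proof -
      have "\<bar>trunc n x - trunc n y\<bar> \<le> 2 * real n * \<bar>\<bar>v \<bullet> x\<bar> - \<bar>v \<bullet> y\<bar>\<bar>"
        unfolding trunc_def by (rule truncated_square_Lipschitz) simp_all
      also have "\<dots> \<le> 2 * real n * (norm v * norm (x - y))"
        using Cauchy_Schwarz_ineq2[of v "x - y"]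
        by (intro mult_left_mono) (auto simp: inner_diff_right)
      finally show ?thesis
        by (simp add: mult_ac)
    qed
    show "\<bar>trunc n x\<bar> \<le> (real n)\<^sup>2" for x
      unfolding trunc_def by (intro abs_leI power_mono) auto
  qed (use assms(3) in \<open>simp_all add: trunc_def\<close>)
  have truncated_limit: "(\<lambda>n. \<integral>x. trunc n x \<partial>r) \<longlonglongrightarrow> (\<integral>x. \<bar>v \<bullet> x\<bar>\<^sup>2 \<partial>r)"
    if "is_dist2 r" for r
    unfolding trunc_def using tendsto_integral_truncated_square[of "\<lambda>x. v \<bullet> x" r]
      integrable_inner_square[OF that] that by (simp add: is_dist2_measurable_iff)
  show ?thesis
    using truncated_limit[OF assms(1)] truncated_limit[OF assms(2)]
    unfolding truncated_eq by (rule LIMSEQ_unique)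
qed

section \<open>Friendly perturbations of a projection\<close>

definition projection_shift :: "'a::real_inner \<Rightarrow> real \<Rightarrow> 'a \<Rightarrow> 'a" where
  "projection_shift v t x = x + ((if 0 \<le> v \<bullet> x then t else - t) - v \<bullet> x) *\<^sub>R v"

lemma
  fixes v x :: "'a::real_inner"
  assumes "norm v = 1" "0 \<le> t"
  shows abs_inner_projection_shift: "\<bar>v \<bullet> projection_shift v t x\<bar> = t"
    and norm_diff_projection_shift: "norm (x - projection_shift v t x) = \<bar>t - \<bar>v \<bullet> x\<bar>\<bar>"
proof -
  have "v \<bullet> v = 1"
    using assms(1) by (simp add: power2_norm_eq_inner[symmetric])
  then show "\<bar>v \<bullet> projection_shift v t x\<bar> = t"
    using assms(2) by (simp add: projection_shift_def inner_add_right)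
  show "norm (x - projection_shift v t x) = \<bar>t - \<bar>v \<bullet> x\<bar>\<bar>"
    using assms by (auto simp: projection_shift_def abs_if)
qed

lemma borel_measurable_projection_shift [measurable]:
  fixes g :: "'b \<Rightarrow> 'a::euclidean_space"
  assumes [measurable]: "g \<in> borel_measurable M" "t \<in> borel_measurable M"
  shows "(\<lambda>z. projection_shift v (t z) (g z)) \<in> borel_measurable M"
  unfolding projection_shift_def by measurable

text \<open>The condition of \<^const>\<open>G_sec\<close> for the projection w = |v \<bullet> X| of a random vector X on M:
  m stands for |v \<bullet> Y|, where Y is the friendly perturbation of X.\<close>
definition friendly_resilient :: "'a measure \<Rightarrow> real \<Rightarrow> real \<Rightarrow> ('a \<Rightarrow> real) \<Rightarrow> bool" where
  "friendly_resilient M \<eta> \<rho> w \<longleftrightarrow>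
    (\<forall>m \<in> borel_measurable M. (\<forall>z. 0 \<le> m z) \<longrightarrow> integrable M (\<lambda>z. (m z)\<^sup>2) \<longrightarrow>
      (\<integral>z. \<bar>m z - w z\<bar> \<partial>M) \<le> \<eta> \<longrightarrow>
      (\<forall>z. min ((w z)\<^sup>2) (\<integral>z. (m z)\<^sup>2 \<partial>M) \<le> (m z)\<^sup>2 \<and> (m z)\<^sup>2 \<le> max ((w z)\<^sup>2) (\<integral>z. (m z)\<^sup>2 \<partial>M)) \<longrightarrow>
      \<bar>(\<integral>z. (w z)\<^sup>2 \<partial>M) - (\<integral>z. (m z)\<^sup>2 \<partial>M)\<bar> \<le> \<rho>)"

lemma integrable_inner_square_distr:
  assumes "is_dist2 p" "distr M borel g = p" "g \<in> measurable M borel"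
  shows "integrable M (\<lambda>z. \<bar>v \<bullet> g z\<bar>\<^sup>2)"
proof -
  have "integrable (distr M borel g) (\<lambda>x. \<bar>v \<bullet> x\<bar>\<^sup>2)"
    using integrable_inner_square[OF assms(1)] assms(2) by simp
  then show ?thesis
    using assms(3) by (simp add: integrable_distr_eq)
qed

lemma norm_projection_shift_le:
  fixes v x :: "'a::real_inner"
  assumes "norm v = 1" "0 \<le> t"
  shows "norm (projection_shift v t x) \<le> 2 * norm x + t"
proof -
  have "norm (projection_shift v t x) \<le> norm x + \<bar>t - \<bar>v \<bullet> x\<bar>\<bar>"
    using norm_triangle_ineq4[of x "x - projection_shift v t x"] norm_diff_projection_shift[OF assms]
    by simp
  also have "\<dots> \<le> norm x + (t + \<bar>v \<bullet> x\<bar>)"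
    using abs_triangle_ineq4[of t "\<bar>v \<bullet> x\<bar>"] assms(2) by simp
  finally show ?thesis
    using Cauchy_Schwarz_ineq2[of v x] assms(1) by simp
qed

lemma integrable_norm_square_projection_shift:
  fixes g :: "'b \<Rightarrow> 'a::euclidean_space"
  assumes v: "norm v = 1" and [measurable]: "g \<in> borel_measurable M" "t \<in> borel_measurable M"
    and t_nonneg: "\<And>z. 0 \<le> t z"
    and square_integrable: "integrable M (\<lambda>z. norm (g z) ^ 2)" "integrable M (\<lambda>z. (t z)\<^sup>2)"
  shows "integrable M (\<lambda>z. norm (projection_shift v (t z) (g z)) ^ 2)"
proof (rule Bochner_Integration.integrable_bound)
  show "integrable M (\<lambda>z. 8 * (norm (g z))\<^sup>2 + 2 * (t z)\<^sup>2)"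
    using square_integrable by simp
  have "(norm (projection_shift v (t z) (g z)))\<^sup>2 \<le> 8 * (norm (g z))\<^sup>2 + 2 * (t z)\<^sup>2" for z
  proof -
    have "(norm (projection_shift v (t z) (g z)))\<^sup>2 \<le> (2 * norm (g z) + t z)\<^sup>2"
      using norm_projection_shift_le[OF v t_nonneg] by (intro power_mono) auto
    moreover have "0 \<le> (2 * norm (g z) - t z)\<^sup>2"
      by simp
    ultimately show ?thesis
      by (simp add: power2_eq_square algebra_simps)
  qed
  then show "AE z in M. norm (norm (projection_shift v (t z) (g z)) ^ 2)
      \<le> norm (8 * (norm (g z))\<^sup>2 + 2 * (t z)\<^sup>2)"
    by (intro AE_I2) simp
qed simp

lemma projection_shift_in_friendly:
  fixes g :: "'a \<Rightarrow> real^'n"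
  assumes p: "is_dist2 p" and v: "norm v = 1" and M: "prob_space M"
    and g [measurable]: "g \<in> borel_measurable M" and marginal: "distr M borel g = p"
    and m [measurable]: "m \<in> borel_measurable M" and m_nonneg: "\<And>z. 0 \<le> m z"
    and m_square: "integrable M (\<lambda>z. (m z)\<^sup>2)"
    and cost: "(\<integral>z. \<bar>m z - \<bar>v \<bullet> g z\<bar>\<bar> \<partial>M) \<le> \<eta>"
    and between: "\<And>z. min (\<bar>v \<bullet> g z\<bar>\<^sup>2) (\<integral>z. (m z)\<^sup>2 \<partial>M) \<le> (m z)\<^sup>2 \<and>
      (m z)\<^sup>2 \<le> max (\<bar>v \<bullet> g z\<bar>\<^sup>2) (\<integral>z. (m z)\<^sup>2 \<partial>M)"
  shows "distr M borel (\<lambda>z. projection_shift v (m z) (g z)) \<in> friendly p \<eta> (\<lambda>x. \<bar>v \<bullet> x\<bar>\<^sup>2)"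
proof -
  interpret prob_space M by (fact M)
  define Y where "Y z = projection_shift v (m z) (g z)" for z
  define \<pi> where "\<pi> = distr M borel (\<lambda>z. (g z, Y z))"
  have Y_inner_square: "(v \<bullet> Y z)\<^sup>2 = (m z)\<^sup>2" for z
    using abs_inner_projection_shift[OF v m_nonneg] by (metis Y_def power2_abs)
  have [measurable]: "Y \<in> borel_measurable M" "(\<lambda>z. (g z, Y z)) \<in> borel_measurable M"
    unfolding Y_def using measurable_Pair[of g M borel Y borel] by (simp_all add: Y_def borel_prod)
  have r_mean: "(\<integral>y. \<bar>v \<bullet> y\<bar>\<^sup>2 \<partial>distr M borel Y) = (\<integral>z. (m z)\<^sup>2 \<partial>M)"
    by (simp add: integral_distr Y_inner_square)
  have g_square: "integrable M (\<lambda>z. norm (g z) ^ 2)"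
    using p marginal by (auto simp: is_dist2_def integrable_distr_eq)
  show ?thesis
    unfolding friendly_def Y_def[symmetric]
  proof (intro CollectI conjI exI)
    show "is_dist2 (distr M borel Y)"
      using integrable_norm_square_projection_shift[OF v g m m_nonneg g_square m_square]
      by (simp add: is_dist2_def prob_space_distr integrable_distr_eq Y_def)
    show "coupling \<pi> p (distr M borel Y)"
      using marginal by (simp add: coupling_def \<pi>_def prob_space_distr distr_distr comp_def)
    have "(\<integral>\<^sup>+z. ennreal (norm (fst z - snd z)) \<partial>\<pi>) = (\<integral>\<^sup>+z. ennreal \<bar>m z - \<bar>v \<bullet> g z\<bar>\<bar> \<partial>M)"
      using norm_diff_projection_shift[OF v m_nonneg] by (simp add: \<pi>_def nn_integral_distr Y_def)
    also have "\<dots> = ennreal (\<integral>z. \<bar>m z - \<bar>v \<bullet> g z\<bar>\<bar> \<partial>M)"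
      using square_integrable_imp_integrable[OF _ m_square]
        square_integrable_imp_integrable[OF _ integrable_inner_square_distr[OF p marginal g]]
      by (intro nn_integral_eq_integral) auto
    finally show "(\<integral>\<^sup>+z. ennreal (norm (fst z - snd z)) \<partial>\<pi>) \<le> ennreal \<eta>"
      using cost by (simp add: ennreal_leI)
    show "AE z in \<pi>. min (\<bar>v \<bullet> fst z\<bar>\<^sup>2) (\<integral>y. \<bar>v \<bullet> y\<bar>\<^sup>2 \<partial>distr M borel Y) \<le> \<bar>v \<bullet> snd z\<bar>\<^sup>2 \<and>
        \<bar>v \<bullet> snd z\<bar>\<^sup>2 \<le> max (\<bar>v \<bullet> fst z\<bar>\<^sup>2) (\<integral>y. \<bar>v \<bullet> y\<bar>\<^sup>2 \<partial>distr M borel Y)"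
      unfolding r_mean \<pi>_def using between by (simp add: AE_distr_iff Y_inner_square)
  qed
qed

lemma G_sec_imp_friendly_resilient:
  fixes g :: "'a \<Rightarrow> real^'n"
  assumes p: "p \<in> G_sec \<rho> \<eta>" and v: "norm v = 1"
    and M: "prob_space M" and g [measurable]: "g \<in> borel_measurable M" and marginal: "distr M borel g = p"
  shows "friendly_resilient M \<eta> \<rho> (\<lambda>z. \<bar>v \<bullet> g z\<bar>)"
  unfolding friendly_resilient_def
proof (intro ballI impI)
  fix m assume m: "m \<in> borel_measurable M" "\<forall>z. 0 \<le> m z" "integrable M (\<lambda>z. (m z)\<^sup>2)"
    "(\<integral>z. \<bar>m z - \<bar>v \<bullet> g z\<bar>\<bar> \<partial>M) \<le> \<eta>"
    "\<forall>z. min (\<bar>v \<bullet> g z\<bar>\<^sup>2) (\<integral>z. (m z)\<^sup>2 \<partial>M) \<le> (m z)\<^sup>2 \<and>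
      (m z)\<^sup>2 \<le> max (\<bar>v \<bullet> g z\<bar>\<^sup>2) (\<integral>z. (m z)\<^sup>2 \<partial>M)"
  define Y where "Y z = projection_shift v (m z) (g z)" for z
  have Y_measurable [measurable]: "Y \<in> borel_measurable M"
    using m(1) unfolding Y_def by measurable
  have "distr M borel Y \<in> friendly p \<eta> (\<lambda>x. \<bar>v \<bullet> x\<bar>\<^sup>2)"
    using p m unfolding Y_def by (intro projection_shift_in_friendly[OF _ v M g marginal]) (auto simp: G_sec_def)
  then have "\<bar>(\<integral>x. \<bar>v \<bullet> x\<bar>\<^sup>2 \<partial>p) - (\<integral>y. \<bar>v \<bullet> y\<bar>\<^sup>2 \<partial>distr M borel Y)\<bar> \<le> \<rho>"
    using p v by (simp add: G_sec_def)
  moreover have "(v \<bullet> Y z)\<^sup>2 = (m z)\<^sup>2" for z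
    using m(2) abs_inner_projection_shift[OF v, of "m z" "g z"] by (metis Y_def power2_abs)
  ultimately show "\<bar>(\<integral>z. (\<bar>v \<bullet> g z\<bar>)\<^sup>2 \<partial>M) - (\<integral>z. (m z)\<^sup>2 \<partial>M)\<bar> \<le> \<rho>"
    by (simp add: marginal[symmetric] integral_distr)
qed

section \<open>Lowering and raising to a common level\<close>

lemma continuous_on_integral_Lipschitz_parameter:
  fixes F :: "real \<Rightarrow> 'a \<Rightarrow> real"
  assumes integrable: "\<And>t. integrable M (F t)" "integrable M K"
    and Lipschitz: "\<And>s t z. \<bar>F s z - F t z\<bar> \<le> K z * \<bar>s - t\<bar>"
  shows "continuous_on U (\<lambda>t. \<integral>z. F t z \<partial>M)"
proof (rule lipschitz_on_continuous_on)
  have K_nonneg: "0 \<le> K z" for z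
    using Lipschitz[of 1 z 0] by simp
  show "(\<integral>z. K z \<partial>M)-lipschitz_on U (\<lambda>t. \<integral>z. F t z \<partial>M)"
  proof (rule lipschitz_onI)
    fix s t
    have "dist (\<integral>z. F s z \<partial>M) (\<integral>z. F t z \<partial>M) = \<bar>\<integral>z. F s z - F t z \<partial>M\<bar>"
      using integrable by (simp add: dist_real_def)
    also have "\<dots> \<le> (\<integral>z. \<bar>F s z - F t z\<bar> \<partial>M)"
      using integral_norm_bound[of M "\<lambda>z. F s z - F t z"] by simp
    also have "\<dots> \<le> (\<integral>z. K z * \<bar>s - t\<bar> \<partial>M)"
      using integrable Lipschitz by (intro integral_mono) auto
    finally show "dist (\<integral>z. F s z \<partial>M) (\<integral>z. F t z \<partial>M) \<le> (\<integral>z. K z \<partial>M) * dist s t"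
      by (simp add: dist_real_def)
  qed (simp add: K_nonneg)
qed

locale level_transport = prob_space M for M :: "'a measure" +
  fixes w1 w2 :: "'a \<Rightarrow> real"
  assumes measurable_w1 [measurable]: "w1 \<in> borel_measurable M"
    and measurable_w2 [measurable]: "w2 \<in> borel_measurable M"
    and w1_nonneg: "\<And>z. 0 \<le> w1 z" and w2_nonneg: "\<And>z. 0 \<le> w2 z"
    and integrable_w1_square: "integrable M (\<lambda>z. (w1 z)\<^sup>2)"
    and integrable_w2_square: "integrable M (\<lambda>z. (w2 z)\<^sup>2)"
begin

definition lowered :: "real \<Rightarrow> 'a \<Rightarrow> real" where
  "lowered t z = min (w1 z) (max t (w2 z))"

definition raised :: "real \<Rightarrow> 'a \<Rightarrow> real" where
  "raised t z = max (w2 z) (min t (w1 z))"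

definition lowered_moment :: "real \<Rightarrow> real" where
  "lowered_moment t = (\<integral>z. (lowered t z)\<^sup>2 \<partial>M)"

definition raised_moment :: "real \<Rightarrow> real" where
  "raised_moment t = (\<integral>z. (raised t z)\<^sup>2 \<partial>M)"

definition lowering_cost :: "real \<Rightarrow> real" where
  "lowering_cost t = (\<integral>z. w1 z - lowered t z \<partial>M)"

definition raising_cost :: "real \<Rightarrow> real" where
  "raising_cost t = (\<integral>z. raised t z - w2 z \<partial>M)"

lemma measurable_lowered [measurable]: "lowered t \<in> borel_measurable M"
  and measurable_raised [measurable]: "raised t \<in> borel_measurable M"
  unfolding lowered_def raised_def by measurable

lemma lowered_nonneg: "0 \<le> lowered t z"
  and raised_nonneg: "0 \<le> raised t z"
  and lowered_le_w1: "lowered t z \<le> w1 z"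
  and lowered_le_raised: "lowered t z \<le> raised t z"
  and w2_le_raised: "w2 z \<le> raised t z"
  and raised_le_w1_plus_w2: "raised t z \<le> w1 z + w2 z"
  using w1_nonneg[of z] w2_nonneg[of z] by (auto simp: lowered_def raised_def)

lemma integrable_w1 [simp]: "integrable M w1"
  and integrable_w2 [simp]: "integrable M w2"
  using integrable_w1_square integrable_w2_square by (auto intro: square_integrable_imp_integrable)

lemma integrable_lowered_square [simp]: "integrable M (\<lambda>z. (lowered t z)\<^sup>2)"
proof (rule Bochner_Integration.integrable_bound[OF integrable_w1_square])
  show "AE z in M. norm ((lowered t z)\<^sup>2) \<le> norm ((w1 z)\<^sup>2)"
    using lowered_nonneg lowered_le_w1 by (intro AE_I2) (simp add: power_mono)
qed simp

lemma integrable_raised_square [simp]: "integrable M (\<lambda>z. (raised t z)\<^sup>2)"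
proof (rule Bochner_Integration.integrable_bound)
  show "integrable M (\<lambda>z. 2 * (w1 z)\<^sup>2 + 2 * (w2 z)\<^sup>2)"
    using integrable_w1_square integrable_w2_square by simp
  have "(raised t z)\<^sup>2 \<le> 2 * (w1 z)\<^sup>2 + 2 * (w2 z)\<^sup>2" for z
  proof -
    have "(raised t z)\<^sup>2 \<le> (w1 z + w2 z)\<^sup>2"
      using raised_le_w1_plus_w2 raised_nonneg by (intro power_mono)
    moreover have "0 \<le> (w1 z - w2 z)\<^sup>2"
      by simp
    ultimately show ?thesis
      by (simp add: power2_eq_square algebra_simps)
  qed
  then show "AE z in M. norm ((raised t z)\<^sup>2) \<le> norm (2 * (w1 z)\<^sup>2 + 2 * (w2 z)\<^sup>2)"
    by (intro AE_I2) simp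
qed simp

lemma integrable_lowered [simp]: "integrable M (lowered t)"
  and integrable_raised [simp]: "integrable M (raised t)"
  by (simp_all add: square_integrable_imp_integrable)

lemma abs_lowered_diff_le: "\<bar>lowered s z - lowered t z\<bar> \<le> \<bar>s - t\<bar>"
  and abs_raised_diff_le: "\<bar>raised s z - raised t z\<bar> \<le> \<bar>s - t\<bar>"
  by (simp_all add: lowered_def raised_def min_def max_def abs_if)

lemma lowering_cost_nonneg: "0 \<le> lowering_cost t"
  and raising_cost_nonneg: "0 \<le> raising_cost t"
  unfolding lowering_cost_def raising_cost_def
  by (rule Bochner_Integration.integral_nonneg, simp add: lowered_le_w1 w2_le_raised)+

lemma lowering_cost_add_raising_cost:
  "lowering_cost t + raising_cost t = (\<integral>z. max 0 (w1 z - w2 z) \<partial>M)"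
proof -
  have "lowering_cost t + raising_cost t = (\<integral>z. (w1 z - lowered t z) + (raised t z - w2 z) \<partial>M)"
    unfolding lowering_cost_def raising_cost_def
    by (rule Bochner_Integration.integral_add[symmetric]) simp_all
  also have "\<dots> = (\<integral>z. max 0 (w1 z - w2 z) \<partial>M)"
    by (rule Bochner_Integration.integral_cong) (auto simp: lowered_def raised_def)
  finally show ?thesis .
qed

lemma lowered_moment_le_raised_moment: "lowered_moment t \<le> raised_moment t"
  unfolding lowered_moment_def raised_moment_def
  by (intro integral_mono) (simp_all add: power_mono lowered_nonneg lowered_le_raised)

lemma continuous_on_lowered_moment: "continuous_on U lowered_moment"
  unfolding lowered_moment_def
proof (rule continuous_on_integral_Lipschitz_parameter[where K = "\<lambda>z. 2 * w1 z"])
  fix s t z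
  have "\<bar>(lowered s z)\<^sup>2 - (lowered t z)\<^sup>2\<bar> \<le> 2 * w1 z * \<bar>lowered s z - lowered t z\<bar>"
    by (intro abs_power2_diff_le lowered_nonneg lowered_le_w1)
  also have "\<dots> \<le> 2 * w1 z * \<bar>s - t\<bar>"
    using w1_nonneg by (intro mult_left_mono abs_lowered_diff_le) simp
  finally show "\<bar>(lowered s z)\<^sup>2 - (lowered t z)\<^sup>2\<bar> \<le> 2 * w1 z * \<bar>s - t\<bar>" .
qed simp_all

lemma continuous_on_lowering_cost: "continuous_on U lowering_cost"
  unfolding lowering_cost_def
proof (rule continuous_on_integral_Lipschitz_parameter[where K = "\<lambda>z. 1"])
  show "\<bar>(w1 z - lowered s z) - (w1 z - lowered t z)\<bar> \<le> 1 * \<bar>s - t\<bar>" for s t z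
    using abs_lowered_diff_le[of t z s] by (simp add: abs_minus_commute)
qed simp_all

lemma continuous_on_raising_cost: "continuous_on U raising_cost"
  unfolding raising_cost_def
proof (rule continuous_on_integral_Lipschitz_parameter[where K = "\<lambda>z. 1"])
  show "\<bar>(raised s z - w2 z) - (raised t z - w2 z)\<bar> \<le> 1 * \<bar>s - t\<bar>" for s t z
    using abs_raised_diff_le[of s z t] by simp
qed simp_all

lemma lowered_square_increment:
  assumes "0 \<le> s" "s \<le> t"
  shows "(lowered t z)\<^sup>2 - (lowered s z)\<^sup>2 \<le> 2 * t * (lowered t z - lowered s z)"
proof (cases "t \<le> w2 z")
  case False
  then have "lowered s z \<le> lowered t z" "lowered t z \<le> t"
    using assms by (auto simp: lowered_def)
  then show ?thesis
    using abs_power2_diff_le[of "lowered t z" t "lowered s z"] lowered_nonneg by simp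
qed (use assms in \<open>simp add: lowered_def\<close>)

lemma raised_square_increment:
  assumes "0 \<le> s" "s \<le> t"
  shows "(raised t z)\<^sup>2 - (raised s z)\<^sup>2 \<le> 2 * t * (raised t z - raised s z)"
proof (cases "t \<le> w2 z")
  case False
  then have "raised s z \<le> raised t z" "raised t z \<le> t"
    using assms by (auto simp: raised_def)
  then show ?thesis
    using abs_power2_diff_le[of "raised t z" t "raised s z"] raised_nonneg by simp
qed (use assms in \<open>simp add: raised_def\<close>)

lemma lowered_moment_increment:
  assumes "0 \<le> s" "s \<le> t"
  shows "lowered_moment t - lowered_moment s \<le> 2 * t * (lowering_cost s - lowering_cost t)"
proof -
  have "lowered_moment t - lowered_moment s = (\<integral>z. (lowered t z)\<^sup>2 - (lowered s z)\<^sup>2 \<partial>M)"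
    by (simp add: lowered_moment_def)
  also have "\<dots> \<le> (\<integral>z. 2 * t * (lowered t z - lowered s z) \<partial>M)"
    using assms by (intro integral_mono) (simp_all add: lowered_square_increment)
  also have "\<dots> = 2 * t * (lowering_cost s - lowering_cost t)"
    by (simp add: lowering_cost_def)
  finally show ?thesis .
qed

lemma raised_moment_increment:
  assumes "0 \<le> s" "s \<le> t"
  shows "raised_moment t - raised_moment s \<le> 2 * t * (raising_cost t - raising_cost s)"
proof -
  have "raised_moment t - raised_moment s = (\<integral>z. (raised t z)\<^sup>2 - (raised s z)\<^sup>2 \<partial>M)"
    by (simp add: raised_moment_def)
  also have "\<dots> \<le> (\<integral>z. 2 * t * (raised t z - raised s z) \<partial>M)"
    using assms by (intro integral_mono) (simp_all add: raised_square_increment)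
  also have "\<dots> = 2 * t * (raising_cost t - raising_cost s)"
    by (simp add: raising_cost_def)
  finally show ?thesis .
qed

lemma lowered_moment_minus_square_antimono:
  assumes "0 \<le> s" "s \<le> t"
  shows "lowered_moment t - t\<^sup>2 \<le> lowered_moment s - s\<^sup>2"
proof -
  have "(lowered t z)\<^sup>2 - t\<^sup>2 \<le> (lowered s z)\<^sup>2 - s\<^sup>2" for z
    unfolding lowered_def using assms by (smt (verit) power2_le_imp_le)
  then have "(\<integral>z. (lowered t z)\<^sup>2 - t\<^sup>2 \<partial>M) \<le> (\<integral>z. (lowered s z)\<^sup>2 - s\<^sup>2 \<partial>M)"
    by (intro integral_mono) simp_all
  then show ?thesis
    by (simp add: lowered_moment_def prob_space)
qed

lemma lowered_between:
  assumes "0 \<le> t" "lowered_moment t \<le> t\<^sup>2"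
  shows "min ((w1 z)\<^sup>2) (lowered_moment t) \<le> (lowered t z)\<^sup>2 \<and>
    (lowered t z)\<^sup>2 \<le> max ((w1 z)\<^sup>2) (lowered_moment t)"
proof
  have "min (w1 z) t \<le> lowered t z"
    by (auto simp: lowered_def)
  then have "min ((w1 z)\<^sup>2) (t\<^sup>2) \<le> (lowered t z)\<^sup>2"
    using assms(1) w1_nonneg[of z] by (auto simp: min_def power_mono split: if_splits)
  then show "min ((w1 z)\<^sup>2) (lowered_moment t) \<le> (lowered t z)\<^sup>2"
    using assms(2) by linarith
  show "(lowered t z)\<^sup>2 \<le> max ((w1 z)\<^sup>2) (lowered_moment t)"
    using lowered_nonneg lowered_le_w1 by (simp add: le_max_iff_disj power_mono)
qed

lemma raised_between:
  assumes "0 \<le> t" "t\<^sup>2 \<le> raised_moment t"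
  shows "min ((w2 z)\<^sup>2) (raised_moment t) \<le> (raised t z)\<^sup>2 \<and>
    (raised t z)\<^sup>2 \<le> max ((w2 z)\<^sup>2) (raised_moment t)"
proof
  show "min ((w2 z)\<^sup>2) (raised_moment t) \<le> (raised t z)\<^sup>2"
    using w2_nonneg w2_le_raised by (simp add: min_le_iff_disj power_mono)
  have "(raised t z)\<^sup>2 \<le> max ((w2 z)\<^sup>2) (t\<^sup>2)"
  proof (cases "w2 z \<le> t")
    case True
    then have "raised t z \<le> t"
      by (simp add: raised_def)
    then show ?thesis
      using raised_nonneg by (simp add: le_max_iff_disj power_mono)
  qed (auto simp: raised_def)
  then show "(raised t z)\<^sup>2 \<le> max ((w2 z)\<^sup>2) (raised_moment t)"
    using assms(2) by linarith
qed

lemma w1_moment_minus_lowered_moment_le: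
  assumes "friendly_resilient M \<eta> \<rho> w1" "0 \<le> t" "lowered_moment t \<le> t\<^sup>2" "lowering_cost t \<le> \<eta>"
  shows "(\<integral>z. (w1 z)\<^sup>2 \<partial>M) - lowered_moment t \<le> \<rho>"
proof -
  have "(\<integral>z. \<bar>lowered t z - w1 z\<bar> \<partial>M) = lowering_cost t"
    unfolding lowering_cost_def
    by (rule Bochner_Integration.integral_cong) (simp_all add: lowered_le_w1 abs_of_nonpos)
  then have "\<bar>(\<integral>z. (w1 z)\<^sup>2 \<partial>M) - lowered_moment t\<bar> \<le> \<rho>"
    using assms lowered_nonneg lowered_between[OF assms(2,3)]
    unfolding friendly_resilient_def lowered_moment_def by auto
  then show ?thesis
    by (simp add: abs_le_iff)
qed

lemma raised_moment_minus_w2_moment_le: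
  assumes "friendly_resilient M \<eta> \<rho> w2" "0 \<le> t" "t\<^sup>2 \<le> raised_moment t" "raising_cost t \<le> \<eta>"
  shows "raised_moment t - (\<integral>z. (w2 z)\<^sup>2 \<partial>M) \<le> \<rho>"
proof -
  have "(\<integral>z. \<bar>raised t z - w2 z\<bar> \<partial>M) = raising_cost t"
    unfolding raising_cost_def
    by (rule Bochner_Integration.integral_cong) (simp_all add: w2_le_raised)
  then have "\<bar>(\<integral>z. (w2 z)\<^sup>2 \<partial>M) - raised_moment t\<bar> \<le> \<rho>"
    using assms raised_nonneg raised_between[OF assms(2,3)]
    unfolding friendly_resilient_def raised_moment_def by auto
  then show ?thesis
    by (simp add: abs_le_iff)
qed

lemma balanced_level_exists:
  obtains \<alpha> where "0 \<le> \<alpha>" "\<alpha> \<le> (\<integral>z. (w1 z)\<^sup>2 \<partial>M) + 1" "lowered_moment \<alpha> = \<alpha>\<^sup>2"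
proof -
  define A where "A = (\<integral>z. (w1 z)\<^sup>2 \<partial>M)"
  have A_nonneg: "0 \<le> A"
    by (simp add: A_def)
  have "lowered_moment (A + 1) \<le> A"
    unfolding A_def lowered_moment_def
    by (intro integral_mono) (simp_all add: power_mono lowered_nonneg lowered_le_w1 integrable_w1_square)
  also have "A \<le> (A + 1)\<^sup>2"
    using A_nonneg by (simp add: power2_eq_square algebra_simps)
  finally have "lowered_moment (A + 1) - (A + 1)\<^sup>2 \<le> 0"
    by simp
  moreover have "0 \<le> lowered_moment 0 - 0\<^sup>2"
    by (simp add: lowered_moment_def)
  moreover have "continuous_on {0..A + 1} (\<lambda>t. lowered_moment t - t\<^sup>2)"
    by (intro continuous_intros continuous_on_lowered_moment)
  ultimately obtain \<alpha> where "0 \<le> \<alpha>" "\<alpha> \<le> A + 1" "lowered_moment \<alpha> - \<alpha>\<^sup>2 = 0"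
    using IVT2'[of "\<lambda>t. lowered_moment t - t\<^sup>2" "A + 1" 0 0] A_nonneg by auto
  then show ?thesis
    using that by (simp add: A_def)
qed

lemma lowered_moment_le_square_above_balance:
  assumes "0 \<le> \<alpha>" "lowered_moment \<alpha> = \<alpha>\<^sup>2" "\<alpha> \<le> t"
  shows "lowered_moment t \<le> t\<^sup>2"
  using lowered_moment_minus_square_antimono[of \<alpha> t] assms by simp

lemma square_le_raised_moment_below_balance:
  assumes "lowered_moment \<alpha> = \<alpha>\<^sup>2" "0 \<le> t" "t \<le> \<alpha>"
  shows "t\<^sup>2 \<le> raised_moment t"
  using lowered_moment_minus_square_antimono[of t \<alpha>] lowered_moment_le_raised_moment[of t] assms
  by simp

lemma raising_cost_zero: "raising_cost 0 = 0"
  using w1_nonneg w2_nonneg by (simp add: raising_cost_def raised_def)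

lemma lowering_cost_le:
  assumes "0 < t"
  shows "lowering_cost t \<le> (\<integral>z. (w1 z)\<^sup>2 \<partial>M) / t"
proof -
  have "w1 z - lowered t z \<le> (w1 z)\<^sup>2 / t" for z
  proof (cases "w1 z \<le> t")
    case False
    then have "w1 z - lowered t z \<le> w1 z" and "w1 z \<le> (w1 z)\<^sup>2 / t"
      using assms lowered_nonneg by (simp_all add: power2_eq_square field_simps)
    then show ?thesis
      by linarith
  qed (simp add: lowered_def less_imp_le[OF assms])
  then have "lowering_cost t \<le> (\<integral>z. (w1 z)\<^sup>2 / t \<partial>M)"
    unfolding lowering_cost_def by (intro integral_mono) (simp_all add: integrable_w1_square)
  then show ?thesis
    by simp
qed

lemma raising_cost_level_exists:
  assumes "0 \<le> \<eta>" "0 \<le> \<alpha>" "\<eta> < raising_cost \<alpha>"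
  obtains h where "0 \<le> h" "h \<le> \<alpha>" "raising_cost h = \<eta>"
proof -
  have "continuous_on {0..\<alpha>} raising_cost"
    by (rule continuous_on_raising_cost)
  then show ?thesis
    using IVT'[of raising_cost 0 \<eta> \<alpha>] raising_cost_zero assms that by auto
qed

lemma lowering_cost_level_exists:
  assumes \<eta>: "0 < \<eta>" and \<alpha>: "0 \<le> \<alpha>" "\<eta> < lowering_cost \<alpha>"
  obtains l where "\<alpha> \<le> l" "l \<le> (\<integral>z. (w1 z)\<^sup>2 \<partial>M) / \<eta> + \<alpha> + 1" "lowering_cost l = \<eta>"
proof -
  define L where "L = (\<integral>z. (w1 z)\<^sup>2 \<partial>M) / \<eta> + \<alpha> + 1"
  have A_nonneg: "0 \<le> (\<integral>z. (w1 z)\<^sup>2 \<partial>M) / \<eta>"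
    using \<eta> by simp
  then have L: "\<alpha> < L" "0 < L"
    using \<alpha> by (simp_all add: L_def)
  have "lowering_cost L \<le> (\<integral>z. (w1 z)\<^sup>2 \<partial>M) / L"
    using L by (intro lowering_cost_le) simp
  also have "\<dots> \<le> \<eta>"
  proof -
    have "(\<integral>z. (w1 z)\<^sup>2 \<partial>M) \<le> \<eta> * L"
      using \<eta> \<alpha> by (simp add: L_def algebra_simps)
    then show ?thesis
      using L by (simp add: divide_le_eq mult.commute)
  qed
  finally have "lowering_cost L \<le> \<eta>" .
  moreover have "continuous_on {\<alpha>..L} lowering_cost"
    by (rule continuous_on_lowering_cost)
  ultimately show ?thesis
    using IVT2'[of lowering_cost L \<eta> \<alpha>] L \<alpha> that unfolding L_def by auto
qed

lemma moment_gap_if_raising_overspent: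
  assumes resilient: "friendly_resilient M \<eta> \<rho> w1" "friendly_resilient M \<eta> \<rho> w2"
    and budget: "(\<integral>z. max 0 (w1 z - w2 z) \<partial>M) \<le> \<eta> + \<delta>" "0 < \<delta>" "\<delta> \<le> \<eta>"
    and balanced: "0 \<le> \<alpha>" "lowered_moment \<alpha> = \<alpha>\<^sup>2"
    and overspent: "\<eta> < raising_cost \<alpha>"
  shows "(\<integral>z. (w1 z)\<^sup>2 \<partial>M) - (\<integral>z. (w2 z)\<^sup>2 \<partial>M) \<le> 2 * \<rho> + 2 * \<alpha> * \<delta>"
proof -
  have lowering_cheap: "lowering_cost \<alpha> \<le> \<eta>"
    using lowering_cost_add_raising_cost[of \<alpha>] budget overspent by linarith
  obtain h where h: "0 \<le> h" "h \<le> \<alpha>" "raising_cost h = \<eta>"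
    using raising_cost_level_exists[OF _ balanced(1) overspent] budget by auto
  have "(\<integral>z. (w1 z)\<^sup>2 \<partial>M) - lowered_moment \<alpha> \<le> \<rho>"
    using balanced lowering_cheap by (intro w1_moment_minus_lowered_moment_le[OF resilient(1)]) simp_all
  moreover have "raised_moment h - (\<integral>z. (w2 z)\<^sup>2 \<partial>M) \<le> \<rho>"
    using h balanced square_le_raised_moment_below_balance[of \<alpha> h]
    by (intro raised_moment_minus_w2_moment_le[OF resilient(2)]) simp_all
  moreover have "raised_moment \<alpha> - raised_moment h \<le> 2 * \<alpha> * (raising_cost \<alpha> - raising_cost h)"
    by (rule raised_moment_increment[OF h(1,2)])
  moreover have "raising_cost \<alpha> - raising_cost h \<le> \<delta>"
    using lowering_cost_add_raising_cost[of \<alpha>] lowering_cost_nonneg[of \<alpha>] budget h(3) by linarith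
  then have "2 * \<alpha> * (raising_cost \<alpha> - raising_cost h) \<le> 2 * \<alpha> * \<delta>"
    using balanced(1) by (intro mult_left_mono) simp_all
  ultimately show ?thesis
    using lowered_moment_le_raised_moment[of \<alpha>] by linarith
qed

lemma moment_gap_if_lowering_overspent:
  assumes resilient: "friendly_resilient M \<eta> \<rho> w1" "friendly_resilient M \<eta> \<rho> w2"
    and budget: "(\<integral>z. max 0 (w1 z - w2 z) \<partial>M) \<le> \<eta> + \<delta>" "0 < \<delta>" "\<delta> \<le> \<eta>"
    and balanced: "0 \<le> \<alpha>" "lowered_moment \<alpha> = \<alpha>\<^sup>2"
    and overspent: "\<eta> < lowering_cost \<alpha>"
  shows "(\<integral>z. (w1 z)\<^sup>2 \<partial>M) - (\<integral>z. (w2 z)\<^sup>2 \<partial>M)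
    \<le> 2 * \<rho> + 2 * ((\<integral>z. (w1 z)\<^sup>2 \<partial>M) / \<eta> + \<alpha> + 1) * \<delta>"
proof -
  have raising_cheap: "raising_cost \<alpha> \<le> \<eta>"
    using lowering_cost_add_raising_cost[of \<alpha>] budget overspent by linarith
  obtain l where l: "\<alpha> \<le> l" "l \<le> (\<integral>z. (w1 z)\<^sup>2 \<partial>M) / \<eta> + \<alpha> + 1" "lowering_cost l = \<eta>"
    using lowering_cost_level_exists[OF _ balanced(1) overspent] budget by auto
  have "(\<integral>z. (w1 z)\<^sup>2 \<partial>M) - lowered_moment l \<le> \<rho>"
    using l balanced lowered_moment_le_square_above_balance
    by (intro w1_moment_minus_lowered_moment_le[OF resilient(1)]) simp_all
  moreover have "raised_moment \<alpha> - (\<integral>z. (w2 z)\<^sup>2 \<partial>M) \<le> \<rho>"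
    using balanced raising_cheap square_le_raised_moment_below_balance[of \<alpha> \<alpha>]
    by (intro raised_moment_minus_w2_moment_le[OF resilient(2)]) simp_all
  moreover have "lowered_moment l - lowered_moment \<alpha> \<le> 2 * l * (lowering_cost \<alpha> - lowering_cost l)"
    using l balanced by (intro lowered_moment_increment) simp_all
  moreover have "lowering_cost \<alpha> - lowering_cost l \<le> \<delta>"
    using lowering_cost_add_raising_cost[of \<alpha>] raising_cost_nonneg[of \<alpha>] budget l(3) by linarith
  then have "2 * l * (lowering_cost \<alpha> - lowering_cost l)
      \<le> 2 * ((\<integral>z. (w1 z)\<^sup>2 \<partial>M) / \<eta> + \<alpha> + 1) * \<delta>"
    using l balanced(1) budget(2) overspent by (intro mult_mono) simp_all
  ultimately show ?thesis
    using lowered_moment_le_raised_moment[of \<alpha>] by linarith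
qed

lemma moment_gap_le:
  assumes resilient: "friendly_resilient M \<eta> \<rho> w1" "friendly_resilient M \<eta> \<rho> w2"
    and budget: "(\<integral>z. max 0 (w1 z - w2 z) \<partial>M) \<le> \<eta> + \<delta>" "0 < \<delta>" "\<delta> \<le> \<eta>"
  shows "(\<integral>z. (w1 z)\<^sup>2 \<partial>M) - (\<integral>z. (w2 z)\<^sup>2 \<partial>M)
    \<le> 2 * \<rho> + 2 * ((\<integral>z. (w1 z)\<^sup>2 \<partial>M) / \<eta> + (\<integral>z. (w1 z)\<^sup>2 \<partial>M) + 2) * \<delta>"
proof -
  define A where "A = (\<integral>z. (w1 z)\<^sup>2 \<partial>M)"
  obtain \<alpha> where \<alpha>: "0 \<le> \<alpha>" "\<alpha> \<le> A + 1" "lowered_moment \<alpha> = \<alpha>\<^sup>2"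
    unfolding A_def by (rule balanced_level_exists)
  have "0 \<le> A / \<eta>"
    using budget by (simp add: A_def)
  then have slack: "0 \<le> 2 * \<alpha> * \<delta>" "2 * \<alpha> * \<delta> \<le> 2 * (A / \<eta> + A + 2) * \<delta>"
      "2 * (A / \<eta> + \<alpha> + 1) * \<delta> \<le> 2 * (A / \<eta> + A + 2) * \<delta>"
    using \<alpha> budget by (simp_all add: mult_right_mono)
  consider "lowering_cost \<alpha> \<le> \<eta>" "raising_cost \<alpha> \<le> \<eta>" | "\<eta> < raising_cost \<alpha>" | "\<eta> < lowering_cost \<alpha>"
    by linarith
  then show ?thesis
  proof cases
    case 1
    have "A - lowered_moment \<alpha> \<le> \<rho>"
      unfolding A_def using \<alpha> 1 by (intro w1_moment_minus_lowered_moment_le[OF resilient(1)]) simp_all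
    moreover have "raised_moment \<alpha> - (\<integral>z. (w2 z)\<^sup>2 \<partial>M) \<le> \<rho>"
      using \<alpha> 1 square_le_raised_moment_below_balance[of \<alpha> \<alpha>]
      by (intro raised_moment_minus_w2_moment_le[OF resilient(2)]) simp_all
    ultimately show ?thesis
      using lowered_moment_le_raised_moment[of \<alpha>] slack unfolding A_def by linarith
  next
    case 2
    from moment_gap_if_raising_overspent[OF resilient budget \<alpha>(1,3) this]
    show ?thesis
      using slack unfolding A_def by linarith
  next
    case 3
    from moment_gap_if_lowering_overspent[OF resilient budget \<alpha>(1,3) this]
    show ?thesis
      using slack unfolding A_def by linarith
  qed
qed

end

lemma coupled_directional_moment_gap_le:
  fixes g1 g2 :: "'a \<Rightarrow> real^'n"
  assumes p1: "p1 \<in> G_sec \<rho> \<eta>" and p2: "p2 \<in> G_sec \<rho> \<eta>" and v: "norm v = 1"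
    and M: "prob_space M"
    and g1 [measurable]: "g1 \<in> borel_measurable M" and marginal1: "distr M borel g1 = p1"
    and g2 [measurable]: "g2 \<in> borel_measurable M" and marginal2: "distr M borel g2 = p2"
    and cost: "(\<integral>\<^sup>+z. ennreal (norm (g1 z - g2 z)) \<partial>M) \<le> ennreal (\<eta> + \<delta>)"
    and \<delta>: "0 < \<delta>" "\<delta> \<le> \<eta>"
  shows "(\<integral>x. \<bar>v \<bullet> x\<bar>\<^sup>2 \<partial>p1) - (\<integral>x. \<bar>v \<bullet> x\<bar>\<^sup>2 \<partial>p2)
    \<le> 2 * \<rho> + 2 * ((\<integral>x. \<bar>v \<bullet> x\<bar>\<^sup>2 \<partial>p1) / \<eta> + (\<integral>x. \<bar>v \<bullet> x\<bar>\<^sup>2 \<partial>p1) + 2) * \<delta>"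
proof -
  have dist: "is_dist2 p1" "is_dist2 p2"
    using p1 p2 by (simp_all add: G_sec_def)
  interpret level_transport M "\<lambda>z. \<bar>v \<bullet> g1 z\<bar>" "\<lambda>z. \<bar>v \<bullet> g2 z\<bar>"
    using M integrable_inner_square_distr[OF dist(1) marginal1] integrable_inner_square_distr[OF dist(2) marginal2]
    by (intro level_transport.intro level_transport_axioms.intro) simp_all
  have moments: "(\<integral>x. \<bar>v \<bullet> x\<bar>\<^sup>2 \<partial>p1) = (\<integral>z. \<bar>v \<bullet> g1 z\<bar>\<^sup>2 \<partial>M)"
      "(\<integral>x. \<bar>v \<bullet> x\<bar>\<^sup>2 \<partial>p2) = (\<integral>z. \<bar>v \<bullet> g2 z\<bar>\<^sup>2 \<partial>M)"
    by (simp_all add: marginal1[symmetric] marginal2[symmetric] integral_distr)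
  have "max 0 (\<bar>v \<bullet> g1 z\<bar> - \<bar>v \<bullet> g2 z\<bar>) \<le> norm (g1 z - g2 z)" for z
    using Cauchy_Schwarz_ineq2[of v "g1 z - g2 z"] v abs_triangle_ineq3[of "v \<bullet> g1 z" "v \<bullet> g2 z"]
    by (simp add: inner_diff_right)
  then have "ennreal (\<integral>z. max 0 (\<bar>v \<bullet> g1 z\<bar> - \<bar>v \<bullet> g2 z\<bar>) \<partial>M)
      \<le> (\<integral>\<^sup>+z. ennreal (norm (g1 z - g2 z)) \<partial>M)"
    by (simp add: nn_integral_eq_integral[symmetric] integrable_max nn_integral_mono ennreal_leI)
  also have "\<dots> \<le> ennreal (\<eta> + \<delta>)"
    by (fact cost)
  finally have budget: "(\<integral>z. max 0 (\<bar>v \<bullet> g1 z\<bar> - \<bar>v \<bullet> g2 z\<bar>) \<partial>M) \<le> \<eta> + \<delta>"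
    by (subst (asm) ennreal_le_iff) (use \<delta> in auto)
  show ?thesis
    unfolding moments
    using moment_gap_le[OF G_sec_imp_friendly_resilient[OF p1 v M g1 marginal1]
        G_sec_imp_friendly_resilient[OF p2 v M g2 marginal2] budget \<delta>]
    by simp
qed

lemma field_le_mult_epsilon:
  fixes x y K \<eta> :: real
  assumes "0 < \<eta>" and "\<And>\<delta>. 0 < \<delta> \<Longrightarrow> \<delta> \<le> \<eta> \<Longrightarrow> x \<le> y + K * \<delta>"
  shows "x \<le> y"
proof (rule tendsto_lowerbound)
  show "((\<lambda>\<delta>. y + K * \<delta>) \<longlongrightarrow> y) (at_right 0)"
    by (auto intro!: tendsto_eq_intros)
  show "eventually (\<lambda>\<delta>. x \<le> y + K * \<delta>) (at_right 0)"
    using assms by (intro eventually_at_rightI[of 0 \<eta>]) auto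
qed simp

lemma G_sec_directional_moment_sub_le:
  assumes p1: "p1 \<in> G_sec \<rho> \<eta>" and p2: "p2 \<in> G_sec \<rho> \<eta>" and v: "norm v = 1"
    and W1: "W1 p1 p2 \<le> ennreal \<eta>" and \<eta>: "0 < \<eta>"
  shows "(\<integral>x. \<bar>v \<bullet> x\<bar>\<^sup>2 \<partial>p1) - (\<integral>x. \<bar>v \<bullet> x\<bar>\<^sup>2 \<partial>p2) \<le> 2 * \<rho>"
proof (rule field_le_mult_epsilon[OF \<eta>])
  fix \<delta> :: real assume \<delta>: "0 < \<delta>" "\<delta> \<le> \<eta>"
  \<comment> \<open>The infimum defining W1 need not be attained: hence the slack \<delta>, removed in the limit.\<close>
  have "W1 p1 p2 < ennreal (\<eta> + \<delta>)"
    using W1 \<eta> \<delta> by (auto simp: ennreal_less_iff intro: le_less_trans)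
  then obtain \<pi> where "coupling \<pi> p1 p2" "(\<integral>\<^sup>+z. ennreal (norm (fst z - snd z)) \<partial>\<pi>) \<le> ennreal (\<eta> + \<delta>)"
    by (auto elim!: W1_less_imp_coupling intro: less_imp_le)
  then show "(\<integral>x. \<bar>v \<bullet> x\<bar>\<^sup>2 \<partial>p1) - (\<integral>x. \<bar>v \<bullet> x\<bar>\<^sup>2 \<partial>p2)
      \<le> 2 * \<rho> + 2 * ((\<integral>x. \<bar>v \<bullet> x\<bar>\<^sup>2 \<partial>p1) / \<eta> + (\<integral>x. \<bar>v \<bullet> x\<bar>\<^sup>2 \<partial>p1) + 2) * \<delta>"
    unfolding coupling_def using coupled_directional_moment_gap_le[OF p1 p2 v, of \<pi> fst snd] \<delta>
    by (simp add: measurable_cong_sets[of \<pi> borel])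
qed

lemma G_sec_directional_moment_diff_le:
  assumes p1: "p1 \<in> G_sec \<rho> \<eta>" and p2: "p2 \<in> G_sec \<rho> \<eta>" and v: "norm v = 1"
    and W1: "W1 p1 p2 \<le> ennreal \<eta>" and "0 \<le> \<rho>" "0 \<le> \<eta>"
  shows "\<bar>(\<integral>x. \<bar>v \<bullet> x\<bar>\<^sup>2 \<partial>p1) - (\<integral>x. \<bar>v \<bullet> x\<bar>\<^sup>2 \<partial>p2)\<bar> \<le> 2 * \<rho>"
proof (cases "\<eta> = 0")
  case True
  have "is_dist2 p1" "is_dist2 p2"
    using p1 p2 by (simp_all add: G_sec_def)
  moreover have "W1 p1 p2 = 0"
    using W1 True by simp
  ultimately show ?thesis
    using W1_zero_imp_directional_moment_eq[of p1 p2 v] \<open>0 \<le> \<rho>\<close> by simp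
next
  case False
  then have "0 < \<eta>"
    using \<open>0 \<le> \<eta>\<close> by simp
  then show ?thesis
    using G_sec_directional_moment_sub_le[OF p1 p2 v W1] G_sec_directional_moment_sub_le[OF p2 p1 v]
      W1 W1_commute[of p1 p2] by (simp add: abs_le_iff)
qed

theorem theorem4p3:
  fixes \<rho> \<eta> \<epsilon> :: real
  assumes "\<rho> \<ge> 0" and "\<eta> \<ge> 0" and "2 * \<epsilon> \<le> \<eta>"
  shows "\<forall>p1 p2 :: (real^'n) measure. p1 \<in> G_sec \<rho> \<eta> \<longrightarrow> p2 \<in> G_sec \<rho> \<eta> \<longrightarrow>
           W1 p1 p2 \<le> ennreal (2 * \<epsilon>) \<longrightarrow>
           onorm (\<lambda>x. (second_moment p1 - second_moment p2) *v x) \<le> 2 * \<rho>"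
proof (intro allI impI)
  fix p1 p2 :: "(real^'n) measure"
  assume p1: "p1 \<in> G_sec \<rho> \<eta>" and p2: "p2 \<in> G_sec \<rho> \<eta>" and W1: "W1 p1 p2 \<le> ennreal (2 * \<epsilon>)"
  have W1_le: "W1 p1 p2 \<le> ennreal \<eta>"
    using W1 assms(3) by (meson ennreal_leI order_trans)
  have dist: "is_dist2 p1" "is_dist2 p2"
    using p1 p2 by (simp_all add: G_sec_def)
  show "onorm (\<lambda>x. (second_moment p1 - second_moment p2) *v x) \<le> 2 * \<rho>"
  proof (rule onorm_symmetric_matrix_le)
    show "transpose (second_moment p1 - second_moment p2) = second_moment p1 - second_moment p2"
      by (simp add: transpose_diff transpose_second_moment)
    fix v :: "real^'n" assume "norm v = 1"
    then show "\<bar>v \<bullet> ((second_moment p1 - second_moment p2) *v v)\<bar> \<le> 2 * \<rho>"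
      using G_sec_directional_moment_diff_le[OF p1 p2 _ W1_le assms(1,2)]
      by (simp add: matrix_vector_mult_diff_rdistrib inner_diff_right inner_second_moment dist)
  qed
qed

end
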